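(* Let $\mathcal{C}=\mathsf{CSS}(A,B)$ be an $[\![n,k,d]\!]$ qudit CSS code with $d\geq 3$. The number of distinct logical operations that can be implemented by permutations of the physical qudits that preserve the codespace is at most $\frac{n!}{k_{\max}!}$, where $k_{\max}=\max\{\dim A,\dim B\}$.
   Context: Let $q$ be a prime power. $A,B\subseteq\mathbb{F}_q^n$ are classical codes with parity-check matrices $H_A,H_B$ (of full row rank) satisfying $H_AH_B^T=0$; $\mathsf{CSS}(A,B)$ is the qudit stabilizer code whose $X$-type stabilizers are the generalized Paulis $X^{v}$ for $v$ in the row space of $H_A$ and whose $Z$-type stabilizers are $Z^{w}$ for $w$ in the row space of $H_B$. It has $n$ physical qudits, $k=\dim A+\dim B-n$ logical qudits, and distance $d$. A permutation of the physical qudits preserving the codespace is a logical operator; two such are counted as the same logical operation if they act identically on the codespace. *)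

theory Defs
  imports "HOL-Analysis.Analysis" "HOL-Combinatorics.Permutations"
begin

text \<open>Vectors of F_q^n are modelled as 'a^'n with 'a a finite field and 'n a finite
index type (n = CARD('n)). Qudit states on n qudits are functions ('a^'n) => complex
(coefficients in the computational basis).\<close>

definition dotp :: "'a::field ^ 'n::finite \<Rightarrow> 'a ^ 'n \<Rightarrow> 'a" where
  "dotp u v = (\<Sum>i\<in>UNIV. u $ i * v $ i)"

definition dual_code :: "('a::field ^ 'n::finite) set \<Rightarrow> ('a ^ 'n) set" where
  "dual_code C = {v. \<forall>c\<in>C. dotp v c = 0}"

definition hweight :: "'a::zero ^ 'n::finite \<Rightarrow> nat" where
  "hweight v = card {i. v $ i \<noteq> 0}"

text \<open>A nontrivial additive character chi : F_q -> C (e.g. omega^tr(.)), used for Z.\<close>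
definition nontriv_add_char :: "('a::field \<Rightarrow> complex) \<Rightarrow> bool" where
  "nontriv_add_char chi \<longleftrightarrow> (\<forall>a b. chi (a + b) = chi a * chi b) \<and> (\<exists>a. chi a \<noteq> 1)"

text \<open>Generalized Paulis: X^v |x> = |x+v>,  Z^w |x> = chi(w.x) |x>.\<close>
definition pauliX :: "'a::field ^ 'n::finite \<Rightarrow> ('a ^ 'n \<Rightarrow> complex) \<Rightarrow> ('a ^ 'n \<Rightarrow> complex)" where
  "pauliX v psi = (\<lambda>x. psi (x - v))"

definition pauliZ :: "('a::field \<Rightarrow> complex) \<Rightarrow> 'a ^ 'n::finite \<Rightarrow> ('a ^ 'n \<Rightarrow> complex) \<Rightarrow> ('a ^ 'n \<Rightarrow> complex)" where
  "pauliZ chi w psi = (\<lambda>x. chi (dotp w x) * psi x)"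

text \<open>CSS(A,B): X-stabilizers X^v for v in the row space of H_A (= dual of A),
Z-stabilizers Z^w for w in the row space of H_B (= dual of B).\<close>
definition css_codespace :: "('a::field \<Rightarrow> complex) \<Rightarrow> ('a ^ 'n::finite) set \<Rightarrow> ('a ^ 'n) set
    \<Rightarrow> ('a ^ 'n \<Rightarrow> complex) set" where
  "css_codespace chi A B = {psi. (\<forall>v\<in>dual_code A. pauliX v psi = psi) \<and>
                                 (\<forall>w\<in>dual_code B. pauliZ chi w psi = psi)}"

text \<open>Distance: minimum weight of a nontrivial logical operator,
i.e. of a vector in (A - B^perp) or (B - A^perp). "d >= t" means all such have weight >= t.\<close>
definition css_distance_ge :: "('a::field ^ 'n::finite) set \<Rightarrow> ('a ^ 'n) set \<Rightarrow> nat \<Rightarrow> bool" where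
  "css_distance_ge A B t \<longleftrightarrow>
     (\<forall>v \<in> (A - dual_code B) \<union> (B - dual_code A). t \<le> hweight v)"

text \<open>Permutation of physical qudits (qudit s i is sent to position i).\<close>
definition perm_op :: "('n::finite \<Rightarrow> 'n) \<Rightarrow> ('a ^ 'n \<Rightarrow> complex) \<Rightarrow> ('a ^ 'n \<Rightarrow> complex)" where
  "perm_op s psi = (\<lambda>x. psi (\<chi> i. x $ s i))"

text \<open>The set of logical operations implemented by codespace-preserving qudit permutations:
each such permutation is identified with its action restricted to the codespace.\<close>
definition perm_logical_ops :: "('a ^ 'n::finite \<Rightarrow> complex) set
    \<Rightarrow> (('a ^ 'n \<Rightarrow> complex) \<Rightarrow> ('a ^ 'n \<Rightarrow> complex)) set" where
  "perm_logical_ops C =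
     (\<lambda>s. restrict (perm_op s) C) ` {s. s permutes (UNIV::'n set) \<and> perm_op s ` C = C}"

end

theory Submission
  imports Defs
begin

(* Let s be a qudit permutation preserving the codespace that fixes every coordinate outside
   an information set J of A (the case of B is symmetric). Applied to the coset states
   |b + A^perp>, s must map A^perp into itself, and a coordinate permutation supported on an
   information set of A can do that only by fixing A^perp pointwise. Then every vector
   e_i - e_(s i) lies in A^perp^perp = A; having weight at most 2 < d it cannot be a nontrivial
   logical operator, so it lies in B^perp, i.e. s fixes B pointwise. Since every codeword is
   supported on B, s acts trivially on the codespace. Hence a codespace-preserving permutation
   is determined as a logical operation by its restriction to the complement of J, an
   injection of n - |J| points into n points: there are n!/|J|! of them, and |J| >= dim A. *)

lemma dotp_commute: "dotp u v = dotp v u"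
  unfolding dotp_def by (simp add: mult.commute)

lemma dotp_diff_left: "dotp (u - u') v = dotp u v - dotp u' v"
  unfolding dotp_def by (simp add: algebra_simps sum_subtractf)

lemma dotp_scale_left: "dotp (c *s u) v = c * dotp u v"
  unfolding dotp_def by (simp add: algebra_simps sum_distrib_left)

lemma dotp_sum_left: "dotp (sum f S) v = (\<Sum>j\<in>S. dotp (f j) v)"
  unfolding dotp_def by (simp add: sum_component sum_distrib_right sum.swap[of _ S])

lemma dotp_axis_left: "dotp (axis i 1) v = v $ i"
proof -
  have "dotp (axis i 1) v = (\<Sum>k\<in>UNIV. if k = i then v $ i else 0)"
    unfolding dotp_def axis_def by (intro sum.cong) auto
  then show ?thesis by simp
qed

lemma subspace_dual_code: "vec.subspace (dual_code V)"
  unfolding vec.subspace_def dual_code_def dotp_def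
  by (simp add: algebra_simps sum.distrib sum_distrib_left[symmetric])

lemma diff_mem_dual_code_iff:
  assumes "v \<in> dual_code V"
  shows "x - v \<in> dual_code V \<longleftrightarrow> x \<in> dual_code V"
  using assms vec.subspace_diff[OF subspace_dual_code] vec.subspace_add[OF subspace_dual_code]
  by (metis diff_add_cancel)

lemma subset_dual_code_dual_code: "V \<subseteq> dual_code (dual_code V)"
  unfolding dual_code_def by (auto simp: dotp_commute)

(* The u j are the rows of a generator matrix of V in systematic form on the coordinates J;
   J is an information set when moreover the projection of V onto J is injective. *)
definition systematic :: "('a::field ^ 'n::finite) set \<Rightarrow> 'n set \<Rightarrow> ('n \<Rightarrow> 'a ^ 'n) \<Rightarrow> bool" where
  "systematic V J u \<longleftrightarrow> (\<forall>j\<in>J. u j \<in> V \<and> (\<forall>k\<in>J. u j $ k = (if k = j then 1 else 0)))"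

definition information_set :: "('a::field ^ 'n::finite) set \<Rightarrow> 'n set \<Rightarrow> ('n \<Rightarrow> 'a ^ 'n) \<Rightarrow> bool" where
  "information_set V J u \<longleftrightarrow> systematic V J u \<and> (\<forall>v\<in>V. (\<forall>j\<in>J. v $ j = 0) \<longrightarrow> v = 0)"

lemma systematic_insert:
  assumes V: "vec.subspace V" and u: "systematic V J u"
    and v: "v \<in> V" "\<forall>j\<in>J. v $ j = 0" "v $ i \<noteq> 0"
  shows "systematic V (insert i J) (\<lambda>j. if j = i then inverse (v $ i) *s v else u j - (u j $ i / v $ i) *s v)"
  using u v unfolding systematic_def
  by (auto simp: V vec.subspace_diff vec.subspace_scale)

lemma information_set_exists:
  fixes V :: "('a::field ^ 'n::finite) set"
  assumes V: "vec.subspace V"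
  obtains J u where "information_set V J u"
proof -
  define G where "G = {J. \<exists>u. systematic V J u}"
  have "{} \<in> G" by (simp add: G_def systematic_def)
  then obtain J where "J \<in> G" and maximal: "\<forall>J'\<in>G. J \<subseteq> J' \<longrightarrow> J = J'"
    using finite_has_maximal2[of G "{}"] by auto
  then obtain u where u: "systematic V J u" by (auto simp: G_def)
  have "v = 0" if v: "v \<in> V" "\<forall>j\<in>J. v $ j = 0" for v
  proof (rule ccontr)
    assume "v \<noteq> 0"
    then obtain i where i: "v $ i \<noteq> 0" by (metis vec_eq_iff zero_index)
    with v have "i \<notin> J" by auto
    moreover have "insert i J = J"
      using maximal systematic_insert[OF V u v i] by (auto simp: G_def)
    ultimately show False by blast
  qed
  with u show thesis by (intro that) (auto simp: information_set_def)
qed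

lemma information_set_decompose:
  assumes V: "vec.subspace V" and J: "information_set V J u" and v: "v \<in> V"
  shows "v = (\<Sum>j\<in>J. v $ j *s u j)"
proof -
  have u: "\<And>j k. j \<in> J \<Longrightarrow> k \<in> J \<Longrightarrow> u j $ k = (if k = j then 1 else 0)" "\<And>j. j \<in> J \<Longrightarrow> u j \<in> V"
    using J by (auto simp: information_set_def systematic_def)
  have "(\<Sum>j\<in>J. v $ j *s u j) $ k = v $ k" if "k \<in> J" for k
    using that by (simp add: sum_component u if_distrib cong: if_cong)
  moreover have "v - (\<Sum>j\<in>J. v $ j *s u j) \<in> V"
    using V v u by (intro vec.subspace_diff vec.subspace_sum vec.subspace_scale) auto
  ultimately have "v - (\<Sum>j\<in>J. v $ j *s u j) = 0"
    using J by (auto simp: information_set_def)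
  then show ?thesis by simp
qed

lemma information_set_dim_le:
  assumes V: "vec.subspace V" and J: "information_set V J u"
  shows "vec.dim V \<le> card J"
proof -
  have "V \<subseteq> vec.span (u ` J)"
  proof
    fix v assume "v \<in> V"
    then have "v = (\<Sum>j\<in>J. v $ j *s u j)" by (rule information_set_decompose[OF V J])
    also have "\<dots> \<in> vec.span (u ` J)"
      by (intro vec.span_sum vec.span_scale vec.span_base) auto
    finally show "v \<in> vec.span (u ` J)" .
  qed
  then have "vec.dim V \<le> card (u ` J)" by (rule vec.dim_le_card) auto
  also have "\<dots> \<le> card J" by (rule card_image_le) auto
  finally show ?thesis .
qed

lemma systematic_dual_eq_0:
  assumes u: "systematic V J u" and z: "z \<in> dual_code V" and out: "\<forall>i. i \<notin> J \<longrightarrow> z $ i = 0"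
  shows "z = 0"
proof -
  have "z $ j = 0" if j: "j \<in> J" for j
  proof -
    have "dotp z (u j) = (\<Sum>i\<in>UNIV. if i = j then z $ j else 0)"
      unfolding dotp_def
    proof (intro sum.cong refl)
      fix i
      show "z $ i * u j $ i = (if i = j then z $ j else 0)"
        using u j out by (cases "i \<in> J") (auto simp: systematic_def)
    qed
    also have "dotp z (u j) = 0" using u j z by (auto simp: systematic_def dual_code_def)
    finally show ?thesis by simp
  qed
  with out show ?thesis by (metis vec_eq_iff zero_index)
qed

lemma information_set_dual_dual_eq_0:
  assumes V: "vec.subspace V" and J: "information_set V J u"
    and x: "x \<in> dual_code (dual_code V)" and on: "\<forall>j\<in>J. x $ j = 0"
  shows "x = 0"
proof -
  have "x $ i = 0" if i: "i \<notin> J" for i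
  proof -
    \<comment> \<open>the parity check of coordinate i read off the systematic form\<close>
    define w where "w = axis i 1 - (\<Sum>j\<in>J. u j $ i *s axis j 1)"
    have w_dotp: "dotp w v = v $ i - (\<Sum>j\<in>J. v $ j * u j $ i)" for v
      unfolding w_def by (simp add: dotp_diff_left dotp_sum_left dotp_scale_left dotp_axis_left mult.commute)
    have "w \<in> dual_code V"
    proof (unfold dual_code_def, intro CollectI ballI)
      fix c assume "c \<in> V"
      then have "c $ i = (\<Sum>j\<in>J. c $ j *s u j) $ i" by (metis information_set_decompose[OF V J])
      then show "dotp w c = 0" by (simp add: w_dotp sum_component)
    qed
    then have "dotp w x = 0" using x by (simp add: dual_code_def dotp_commute)
    then show ?thesis using on by (simp add: w_dotp)
  qed
  with on show ?thesis by (metis vec_eq_iff zero_index)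
qed

lemma dual_code_dual_code:
  assumes V: "vec.subspace V"
  shows "dual_code (dual_code V) = V"
proof
  obtain J u where J: "information_set V J u" using information_set_exists[OF V] .
  show "dual_code (dual_code V) \<subseteq> V"
  proof
    fix x assume x: "x \<in> dual_code (dual_code V)"
    have u: "\<And>j. j \<in> J \<Longrightarrow> u j \<in> V" "\<And>j k. j \<in> J \<Longrightarrow> k \<in> J \<Longrightarrow> u j $ k = (if k = j then 1 else 0)"
      using J by (auto simp: information_set_def systematic_def)
    have span: "(\<Sum>j\<in>J. x $ j *s u j) \<in> V"
      using V u by (intro vec.subspace_sum vec.subspace_scale) auto
    have "x - (\<Sum>j\<in>J. x $ j *s u j) = 0"
    proof (rule information_set_dual_dual_eq_0[OF V J])
      show "x - (\<Sum>j\<in>J. x $ j *s u j) \<in> dual_code (dual_code V)"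
        using x span subset_dual_code_dual_code by (blast intro: vec.subspace_diff subspace_dual_code)
      show "\<forall>j\<in>J. (x - (\<Sum>j\<in>J. x $ j *s u j)) $ j = 0"
        by (simp add: sum_component u if_distrib cong: if_cong)
    qed
    with span show "x \<in> V" by simp
  qed
qed (rule subset_dual_code_dual_code)

definition vec_permute :: "('n::finite \<Rightarrow> 'n) \<Rightarrow> 'a ^ 'n \<Rightarrow> 'a ^ 'n" where
  "vec_permute s x = (\<chi> i. x $ s i)"

lemma vec_permute_nth [simp]: "vec_permute s x $ i = x $ s i"
  by (simp add: vec_permute_def)

lemma vec_permute_zero [simp]: "vec_permute s 0 = 0"
  by (simp add: vec_eq_iff)

lemma perm_op_eq: "perm_op s psi = psi \<circ> vec_permute s"
  by (simp add: perm_op_def vec_permute_def comp_def)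

lemma perm_op_comp: "perm_op (t \<circ> s) psi = perm_op t (perm_op s psi)"
  by (simp add: perm_op_def)

lemma perm_op_id [simp]: "perm_op id psi = psi"
  by (simp add: perm_op_def)

lemma vec_permute_vec_permute_inv:
  assumes "s permutes UNIV"
  shows "vec_permute s (vec_permute (inv s) x) = x"
  using assms by (simp add: vec_eq_iff permutes_inverses)

lemma inj_vec_permute:
  assumes "s permutes UNIV"
  shows "inj (vec_permute s)"
proof (rule injI)
  fix x y assume "vec_permute s x = vec_permute s y"
  then have "x $ s (inv s i) = y $ s (inv s i)" for i by (metis vec_permute_nth)
  then show "x = y" using assms by (simp add: vec_eq_iff permutes_inverses)
qed

lemma dotp_vec_permute:
  assumes "s permutes UNIV"
  shows "dotp (vec_permute s x) (vec_permute s y) = dotp x y"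
  unfolding dotp_def using sum.permute[OF assms, of "\<lambda>i. x $ i * y $ i"] by (simp add: comp_def)

lemma axis_diff_in_dual_code_iff:
  "(\<forall>i. axis i 1 - axis (s i) 1 \<in> dual_code W) \<longleftrightarrow> (\<forall>w\<in>W. vec_permute s w = w)"
proof -
  have "axis i 1 - axis (s i) 1 \<in> dual_code W \<longleftrightarrow> (\<forall>w\<in>W. w $ i = w $ s i)" for i
    by (simp add: dual_code_def dotp_diff_left dotp_axis_left)
  then show ?thesis unfolding vec_eq_iff vec_permute_nth by metis
qed

lemma hweight_axis_diff_le: "hweight (axis i 1 - axis j 1 :: 'a::field ^ 'n::finite) \<le> 2"
proof -
  have "hweight (axis i 1 - axis j 1 :: 'a ^ 'n) \<le> card {i, j}"
    unfolding hweight_def by (intro card_mono) (auto simp: axis_def)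
  also have "\<dots> \<le> 2" by (simp add: card_insert_le_m1)
  finally show ?thesis .
qed

lemma fixes_dual_code_if_maps_dual_code:
  assumes u: "systematic V J u" and fixed: "\<forall>i. i \<notin> J \<longrightarrow> s i = i"
    and maps: "vec_permute s ` dual_code V \<subseteq> dual_code V" and y: "y \<in> dual_code V"
  shows "vec_permute s y = y"
proof -
  have "vec_permute s y - y \<in> dual_code V"
    using maps y by (blast intro: vec.subspace_diff subspace_dual_code)
  then have "vec_permute s y - y = 0"
    by (rule systematic_dual_eq_0[OF u]) (simp add: fixed)
  then show ?thesis by simp
qed

lemma fixes_code_if_distance:
  fixes V W :: "('a::field ^ 'n::finite) set"
  assumes V: "vec.subspace V" and J: "information_set V J u"
    and fixed: "\<forall>i. i \<notin> J \<longrightarrow> s i = i"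
    and maps: "vec_permute s ` dual_code V \<subseteq> dual_code V"
    and dist: "\<forall>v\<in>V - dual_code W. 3 \<le> hweight v"
  shows "\<forall>w\<in>W. vec_permute s w = w"
proof -
  have "\<forall>y\<in>dual_code V. vec_permute s y = y"
    using J fixed maps fixes_dual_code_if_maps_dual_code by (auto simp: information_set_def)
  then have "\<forall>i. axis i 1 - axis (s i) 1 \<in> dual_code (dual_code V)"
    by (simp add: axis_diff_in_dual_code_iff)
  then have in_V: "axis i 1 - axis (s i) 1 \<in> V" for i
    by (simp add: dual_code_dual_code[OF V])
  have "axis i 1 - axis (s i) 1 \<in> dual_code W" for i
  proof (rule ccontr)
    assume "axis i 1 - axis (s i) 1 \<notin> dual_code W"
    then have "3 \<le> hweight (axis i 1 - axis (s i) 1 :: 'a ^ 'n)" using in_V dist by blast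
    moreover have "hweight (axis i 1 - axis (s i) 1 :: 'a ^ 'n) \<le> 2" by (rule hweight_axis_diff_le)
    ultimately show False by linarith
  qed
  then show ?thesis by (simp add: axis_diff_in_dual_code_iff[symmetric])
qed

locale css_code =
  fixes A B :: "('a::field ^ 'n::finite) set" and chi :: "'a \<Rightarrow> complex"
  assumes subspace_A: "vec.subspace A" and subspace_B: "vec.subspace B"
    and duals_orthogonal: "\<forall>u\<in>dual_code A. \<forall>w\<in>dual_code B. dotp u w = 0"
    and chi: "nontriv_add_char chi"
begin

abbreviation C :: "('a ^ 'n \<Rightarrow> complex) set" where
  "C \<equiv> css_codespace chi A B"

lemma mem_codespace_iff: "psi \<in> C \<longleftrightarrow> (\<forall>v\<in>dual_code A. \<forall>x. psi (x - v) = psi x) \<and>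
    (\<forall>w\<in>dual_code B. \<forall>x. chi (dotp w x) * psi x = psi x)"
  unfolding css_codespace_def pauliX_def pauliZ_def by (auto simp: fun_eq_iff)

lemma codespace_support:
  assumes psi: "psi \<in> C" and x: "psi x \<noteq> 0"
  shows "x \<in> B"
proof -
  have "dotp x c = 0" if c: "c \<in> dual_code B" for c
  proof (rule ccontr)
    assume nz: "dotp x c \<noteq> 0"
    have "chi a = 1" for a
    proof -
      have "(a / dotp x c) *s c \<in> dual_code B"
        using c by (rule vec.subspace_scale[OF subspace_dual_code])
      moreover have "dotp ((a / dotp x c) *s c) x = a"
        using nz by (simp add: dotp_scale_left dotp_commute[of c])
      ultimately have "chi a * psi x = psi x" using psi unfolding mem_codespace_iff by metis
      then show ?thesis using x by simp
    qed
    with chi show False unfolding nontriv_add_char_def by blast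
  qed
  then have "x \<in> dual_code (dual_code B)" by (simp add: dual_code_def)
  then show ?thesis by (simp add: dual_code_dual_code[OF subspace_B])
qed

lemma codespace_trivial_if_chi_0:
  assumes "chi 0 \<noteq> 1" and "psi \<in> C"
  shows "psi = (\<lambda>_. 0)"
proof
  fix x
  have "chi (dotp 0 x) * psi x = psi x"
    using assms(2) vec.subspace_0[OF subspace_dual_code] unfolding mem_codespace_iff by blast
  then show "psi x = 0" using assms(1) by (simp add: dotp_def)
qed

definition coset_state :: "'a ^ 'n \<Rightarrow> 'a ^ 'n \<Rightarrow> complex" where
  "coset_state b = (\<lambda>x. if x - b \<in> dual_code A then 1 else 0)"

lemma coset_state_in_codespace:
  assumes chi_0: "chi 0 = 1" and b: "b \<in> B"
  shows "coset_state b \<in> C"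
  unfolding mem_codespace_iff
proof (intro conjI ballI allI)
  fix v x assume v: "v \<in> dual_code A"
  have "x - v - b \<in> dual_code A \<longleftrightarrow> (x - b) - v \<in> dual_code A" by (simp add: algebra_simps)
  also have "\<dots> \<longleftrightarrow> x - b \<in> dual_code A" by (rule diff_mem_dual_code_iff[OF v])
  finally show "coset_state b (x - v) = coset_state b x" by (simp add: coset_state_def)
next
  fix w x assume w: "w \<in> dual_code B"
  show "chi (dotp w x) * coset_state b x = coset_state b x"
  proof (cases "x - b \<in> dual_code A")
    case True
    have "dotp (x - b) w = 0" using duals_orthogonal True w by blast
    moreover have "dotp b w = 0"
      using b w subset_dual_code_dual_code[of B] by (auto simp: dual_code_def)
    ultimately have "dotp x w = 0" by (simp add: dotp_diff_left)
    then show ?thesis using chi_0 by (simp add: dotp_commute)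
  qed (simp add: coset_state_def)
qed

lemma vec_permute_maps_dual_A:
  assumes chi_0: "chi 0 = 1" and preserves: "perm_op s ` C \<subseteq> C"
  shows "vec_permute s ` dual_code A \<subseteq> dual_code A"
proof
  fix y assume "y \<in> vec_permute s ` dual_code A"
  then obtain v where v: "v \<in> dual_code A" and y: "y = vec_permute s v" by blast
  have "perm_op s (coset_state 0) \<in> C"
    using preserves coset_state_in_codespace[OF chi_0 vec.subspace_0[OF subspace_B]] by blast
  then have "perm_op s (coset_state 0) (v - v) = perm_op s (coset_state 0) v"
    using v unfolding mem_codespace_iff by blast
  then have "coset_state 0 (vec_permute s v) = coset_state 0 (vec_permute s 0)"
    by (simp add: perm_op_eq)
  also have "\<dots> = 1"
    using vec.subspace_0[OF subspace_dual_code] by (simp add: coset_state_def)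
  finally show "y \<in> dual_code A" by (simp add: y coset_state_def split: if_splits)
qed

lemma vec_permute_maps_dual_B:
  assumes chi_0: "chi 0 = 1" and s: "s permutes UNIV" and preserves: "perm_op s ` C \<subseteq> C"
  shows "vec_permute s ` dual_code B \<subseteq> dual_code B"
proof -
  have inv_B: "vec_permute (inv s) b \<in> B" if b: "b \<in> B" for b
  proof (rule codespace_support)
    show "perm_op s (coset_state b) \<in> C"
      using preserves coset_state_in_codespace[OF chi_0 b] by blast
    show "perm_op s (coset_state b) (vec_permute (inv s) b) \<noteq> 0"
      using vec.subspace_0[OF subspace_dual_code]
      by (simp add: perm_op_eq coset_state_def vec_permute_vec_permute_inv[OF s])
  qed
  have "dotp (vec_permute s w) b = 0" if w: "w \<in> dual_code B" and b: "b \<in> B" for w b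
  proof -
    have "dotp (vec_permute s w) b = dotp (vec_permute s w) (vec_permute s (vec_permute (inv s) b))"
      by (simp add: vec_permute_vec_permute_inv[OF s])
    also have "\<dots> = dotp w (vec_permute (inv s) b)" by (rule dotp_vec_permute[OF s])
    also have "\<dots> = 0" using w inv_B[OF b] by (simp add: dual_code_def)
    finally show ?thesis .
  qed
  then show ?thesis by (auto simp: dual_code_def)
qed

lemma perm_op_trivial_if_fixes_B:
  assumes s: "s permutes UNIV" and fixes_B: "\<forall>b\<in>B. vec_permute s b = b" and psi: "psi \<in> C"
  shows "perm_op s psi = psi"
proof
  fix x
  have fixed_x: "vec_permute s x = x" if "psi x \<noteq> 0 \<or> psi (vec_permute s x) \<noteq> 0"
    using that
  proof
    assume "psi x \<noteq> 0"
    then have "x \<in> B" by (rule codespace_support[OF psi])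
    then show ?thesis by (rule bspec[OF fixes_B])
  next
    assume "psi (vec_permute s x) \<noteq> 0"
    then have "vec_permute s x \<in> B" by (rule codespace_support[OF psi])
    then have "vec_permute s (vec_permute s x) = vec_permute s x" by (rule bspec[OF fixes_B])
    then show ?thesis by (rule injD[OF inj_vec_permute[OF s]])
  qed
  show "perm_op s psi x = psi x"
  proof (cases "psi x = 0 \<and> psi (vec_permute s x) = 0")
    case False
    then have "vec_permute s x = x" by (intro fixed_x) blast
    then show ?thesis by (simp add: perm_op_eq)
  qed (simp add: perm_op_eq)
qed

lemma perm_op_trivial_if_fixes_A:
  assumes s: "s permutes UNIV" and fixes_A: "\<forall>a\<in>A. vec_permute s a = a" and psi: "psi \<in> C"
  shows "perm_op s psi = psi"
proof
  fix x
  have "dotp (vec_permute s x) a = dotp x a" if "a \<in> A" for a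
    using dotp_vec_permute[OF s, of x a] fixes_A that by simp
  then have "x - vec_permute s x \<in> dual_code A"
    by (simp add: dual_code_def dotp_diff_left)
  then have "psi (x - (x - vec_permute s x)) = psi x"
    using psi unfolding mem_codespace_iff by blast
  then show "perm_op s psi x = psi x" by (simp add: perm_op_eq)
qed

lemma perm_op_trivial_if_fixes_outside_information_set:
  assumes dist: "css_distance_ge A B 3"
    and J: "information_set A J u \<or> information_set B J u"
    and s: "s permutes UNIV" and fixed: "\<forall>i. i \<notin> J \<longrightarrow> s i = i"
    and preserves: "perm_op s ` C \<subseteq> C" and psi: "psi \<in> C"
  shows "perm_op s psi = psi"
proof (cases "chi 0 = 1")
  case True
  have dist_A: "\<forall>v\<in>A - dual_code B. 3 \<le> hweight v" and dist_B: "\<forall>v\<in>B - dual_code A. 3 \<le> hweight v"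
    using dist unfolding css_distance_ge_def by blast+
  from J show ?thesis
  proof
    assume "information_set A J u"
    from fixes_code_if_distance[OF subspace_A this fixed vec_permute_maps_dual_A[OF True preserves] dist_A]
    show ?thesis by (rule perm_op_trivial_if_fixes_B[OF s _ psi])
  next
    assume "information_set B J u"
    from fixes_code_if_distance[OF subspace_B this fixed vec_permute_maps_dual_B[OF True s preserves] dist_B]
    show ?thesis by (rule perm_op_trivial_if_fixes_A[OF s _ psi])
  qed
next
  \<comment> \<open>An additive character with chi 0 \<noteq> 1 is identically 0, so C = {0}.\<close>
  case False
  then have "psi = (\<lambda>_. 0)" using codespace_trivial_if_chi_0 psi by blast
  then show ?thesis by (simp add: perm_op_def)
qed

end


lemma restrict_perm_op_eq_if_agree_outside:
  assumes trivial: "\<And>\<sigma> psi. \<sigma> permutes UNIV \<Longrightarrow> \<forall>i. i \<notin> J \<longrightarrow> \<sigma> i = i \<Longrightarrow>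
      perm_op \<sigma> ` C \<subseteq> C \<Longrightarrow> psi \<in> C \<Longrightarrow> perm_op \<sigma> psi = psi"
    and s: "s permutes UNIV" "perm_op s ` C = C" and t: "t permutes UNIV" "perm_op t ` C = C"
    and agree: "\<forall>i. i \<notin> J \<longrightarrow> s i = t i"
  shows "restrict (perm_op s) C = restrict (perm_op t) C"
proof -
  define \<sigma> where "\<sigma> = inv t \<circ> s"
  have \<sigma>: "\<sigma> permutes UNIV" unfolding \<sigma>_def using s t by (intro permutes_compose permutes_inv)
  have s_eq: "s = t \<circ> \<sigma>" unfolding \<sigma>_def using t by (simp add: fun_eq_iff permutes_inverses)
  have "perm_op (inv t) phi \<in> C" if "phi \<in> C" for phi
  proof -
    from that t obtain phi' where "phi' \<in> C" "phi = perm_op t phi'" by blast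
    moreover have "inv t \<circ> t = id" using permutes_inv_o(2)[OF t(1)] .
    ultimately show ?thesis by (metis perm_op_comp perm_op_id)
  qed
  then have "perm_op \<sigma> ` C \<subseteq> C" using s(2) by (auto simp: \<sigma>_def perm_op_comp)
  moreover have "\<forall>i. i \<notin> J \<longrightarrow> \<sigma> i = i" unfolding \<sigma>_def using agree t by (simp add: permutes_inverses)
  ultimately have "perm_op s psi = perm_op t psi" if "psi \<in> C" for psi
    using trivial[OF \<sigma> _ _ that] by (simp add: s_eq perm_op_comp)
  then show ?thesis by (auto simp: restrict_def)
qed

lemma card_image_le_card_image:
  assumes "finite (g ` S)" and "\<forall>s\<in>S. \<forall>t\<in>S. g s = g t \<longrightarrow> f s = f t"
  shows "card (f ` S) \<le> card (g ` S)"
proof -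
  have "f (inv_into S g (g s)) = f s" if "s \<in> S" for s
    using assms(2) that inv_into_into[of "g s" g S] f_inv_into_f[of "g s" g S] by blast
  then have "f ` S = (\<lambda>r. f (inv_into S g r)) ` g ` S"
    unfolding image_image by (intro image_cong) auto
  then show ?thesis using card_image_le[OF assms(1)] by simp
qed

lemma prod_diff_mul_fact:
  assumes "k \<le> n"
  shows "(\<Prod>i<k. n - i) * fact (n - k) = (fact n :: nat)"
  using assms
proof (induction k)
  case (Suc k)
  have n_k: "n - k = Suc (n - Suc k)" using Suc.prems by simp
  have "(n - k) * fact (n - Suc k) = (fact (n - k) :: nat)" by (simp only: n_k fact_Suc) simp
  then have "(\<Prod>i<Suc k. n - i) * fact (n - Suc k) = (\<Prod>i<k. n - i) * fact (n - k)"
    by (simp add: mult.assoc)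
  with Suc show ?case by simp
qed simp

lemma card_perm_logical_ops_le:
  fixes C :: "('a ^ 'n::finite \<Rightarrow> complex) set"
  assumes trivial: "\<And>\<sigma> psi. \<sigma> permutes UNIV \<Longrightarrow> \<forall>i. i \<notin> J \<longrightarrow> \<sigma> i = i \<Longrightarrow>
      perm_op \<sigma> ` C \<subseteq> C \<Longrightarrow> psi \<in> C \<Longrightarrow> perm_op \<sigma> psi = psi"
  shows "real (card (perm_logical_ops C)) \<le> fact CARD('n) / fact (card J)"
proof -
  define S where "S = {s. s permutes (UNIV :: 'n set) \<and> perm_op s ` C = C}"
  define I where "I = - J"
  define injections where "injections = {r \<in> I \<rightarrow>\<^sub>E (UNIV :: 'n set). inj_on r I}"
  have "restrict s I \<in> injections" if "s \<in> S" for s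
  proof -
    have "inj s" using that permutes_inj by (auto simp: S_def)
    then show ?thesis by (auto simp: injections_def inj_on_def)
  qed
  then have restrict_injections: "(\<lambda>s. restrict s I) ` S \<subseteq> injections" by blast
  have agree: "restrict (perm_op s) C = restrict (perm_op t) C"
    if "s \<in> S" "t \<in> S" "restrict s I = restrict t I" for s t
  proof (rule restrict_perm_op_eq_if_agree_outside[OF trivial])
    show "\<forall>i. i \<notin> J \<longrightarrow> s i = t i"
      using that(3) unfolding I_def by (metis ComplI restrict_apply')
  qed (use that in \<open>auto simp: S_def\<close>)
  have "card (perm_logical_ops C) \<le> card ((\<lambda>s. restrict s I) ` S)"
    unfolding perm_logical_ops_def S_def[symmetric]
    by (rule card_image_le_card_image) (simp, use agree in blast)
  also have "\<dots> \<le> card injections"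
    by (rule card_mono) (simp_all add: restrict_injections)
  also have "card injections = (\<Prod>i<card I. CARD('n) - i)"
    unfolding injections_def by (subst card_inj_on_subset_funcset) (auto simp: atLeast0LessThan)
  finally have le: "card (perm_logical_ops C) \<le> (\<Prod>i<card I. CARD('n) - i)" .
  have "card I = CARD('n) - card J" unfolding I_def Compl_eq_Diff_UNIV by (rule card_Diff_subset) auto
  moreover have "card J \<le> CARD('n)" by (rule card_mono) auto
  ultimately have "(\<Prod>i<card I. CARD('n) - i) * fact (card J) = (fact CARD('n) :: nat)"
    using prod_diff_mul_fact[of "card I" "CARD('n)"] by simp
  then have "real (\<Prod>i<card I. CARD('n) - i) * fact (card J) = fact CARD('n)"
    by (metis of_nat_fact of_nat_mult)
  then have "real (\<Prod>i<card I. CARD('n) - i) = fact CARD('n) / fact (card J)"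
    by (simp add: eq_divide_eq)
  with le show ?thesis by (metis of_nat_mono)
qed

theorem theorem2:
  fixes A B :: "('a::{field,finite} ^ 'n::finite) set"
    and chi :: "'a \<Rightarrow> complex"
  assumes "vec.subspace A" and "vec.subspace B"
    and "\<forall>u\<in>dual_code A. \<forall>w\<in>dual_code B. dotp u w = 0"
    and "nontriv_add_char chi"
    and "css_distance_ge A B 3"
  shows "real (card (perm_logical_ops (css_codespace chi A B)))
           \<le> fact CARD('n) / fact (max (vec.dim A) (vec.dim B))"
proof -
  interpret css_code A B chi using assms(1-4) by unfold_locales
  obtain JA uA where JA: "information_set A JA uA" using information_set_exists[OF assms(1)] .
  obtain JB uB where JB: "information_set B JB uB" using information_set_exists[OF assms(2)] .
  have bound: "real (card (perm_logical_ops C)) \<le> fact CARD('n) / fact k"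
    if "information_set A J u \<or> information_set B J u" and "k \<le> card J" for J u k
  proof -
    have "real (card (perm_logical_ops C)) \<le> fact CARD('n) / fact (card J)"
      using perm_op_trivial_if_fixes_outside_information_set[OF assms(5) that(1)]
      by (intro card_perm_logical_ops_le)
    also have "\<dots> \<le> fact CARD('n) / fact k"
      using that(2) by (intro divide_left_mono fact_mono) auto
    finally show ?thesis .
  qed
  show ?thesis
    using bound[of JA uA] bound[of JB uB] JA JB
      information_set_dim_le[OF assms(1) JA] information_set_dim_le[OF assms(2) JB]
    by (cases "vec.dim A \<le> vec.dim B") (auto simp: max_def)
qed

end
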